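(* Let $n_1,m_1,n_2,m_2\ge1$ be integers with $n_1+n_2=m_1+m_2$ and let $\mathbf{S}=(1^{n_1},\ast^{m_1},1^{n_2},\ast^{m_2})$. Then \[ |NC_2(\mathbf{S})|=1+\min\{n_1,m_1,n_2,m_2\},\qquad |NC(\mathbf{S})|=1+2\min\{n_1,m_1,n_2,m_2\}. \]
   Context: $1^k$ denotes $k$ consecutive entries $1$ (similarly $\ast^k$); $\mathbf{S}$ has length $N=2(n_1+n_2)$. $NC(\mathbf{S})$ is the set of non-crossing partitions of $\{1,\ldots,N\}$ each of whose blocks has even size and, with its elements in increasing order, has corresponding entries of $\mathbf{S}$ alternating between $1$ and $\ast$. $NC_2(\mathbf{S})$ is the subset of $NC(\mathbf{S})$ consisting of pairings (all blocks of size $2$). *)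

theory Defs
  imports Main "HOL-Library.Disjoint_Sets"
begin

text \<open>A word over the alphabet {1, *} is a list of booleans: True encodes 1, False encodes *.
  Positions are 1..length s; the entry at position i is s ! (i - 1).\<close>

definition noncrossing :: "nat set set \<Rightarrow> bool" where
  "noncrossing P \<longleftrightarrow> (\<forall>B\<in>P. \<forall>B'\<in>P. B \<noteq> B' \<longrightarrow>
     \<not> (\<exists>a b c d. a < b \<and> b < c \<and> c < d \<and> a \<in> B \<and> c \<in> B \<and> b \<in> B' \<and> d \<in> B'))"

definition alternating_block :: "bool list \<Rightarrow> nat set \<Rightarrow> bool" where
  "alternating_block s B \<longleftrightarrow>
     (let xs = sorted_list_of_set B in
      \<forall>i. Suc i < length xs \<longrightarrow> s ! (xs ! i - 1) \<noteq> s ! (xs ! Suc i - 1))"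

definition NC :: "bool list \<Rightarrow> nat set set set" where
  "NC s = {P. partition_on {1..length s} P \<and> noncrossing P \<and>
               (\<forall>B\<in>P. even (card B) \<and> alternating_block s B)}"

definition NC2 :: "bool list \<Rightarrow> nat set set set" where
  "NC2 s = {P \<in> NC s. \<forall>B\<in>P. card B = 2}"

definition word4 :: "nat \<Rightarrow> nat \<Rightarrow> nat \<Rightarrow> nat \<Rightarrow> bool list" where
  "word4 n1 m1 n2 m2 = replicate n1 True @ replicate m1 False @ replicate n2 True @ replicate m2 False"

end

theory Submission
  imports Defs
begin

definition consecutive_in :: "nat set \<Rightarrow> nat \<Rightarrow> nat \<Rightarrow> bool" where
  "consecutive_in B x y \<longleftrightarrow> x \<in> B \<and> y \<in> B \<and> x < y \<and> (\<forall>z\<in>B. \<not> (x < z \<and> z < y))"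

lemma consecutive_in_exists:
  assumes "finite B" "x \<in> B" "y \<in> B" "x < y"
  obtains z where "consecutive_in B x z" "z \<le> y"
proof -
  define Z where "Z = {z \<in> B. x < z}"
  have "finite Z" "y \<in> Z" using assms by (auto simp: Z_def)
  then have "Min Z \<in> Z" "Min Z \<le> y" "\<forall>z\<in>Z. Min Z \<le> z" using Min_in by auto
  then have "consecutive_in B x (Min Z)"
    using assms(2) unfolding consecutive_in_def Z_def by force
  then show ?thesis using \<open>Min Z \<le> y\<close> that by blast
qed

lemma consecutive_in_iff_adjacent_in_sorted_list:
  assumes "finite B"
  shows "consecutive_in B x y \<longleftrightarrow> (\<exists>i. Suc i < length (sorted_list_of_set B)
           \<and> x = sorted_list_of_set B ! i \<and> y = sorted_list_of_set B ! Suc i)"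
proof -
  define xs where "xs = sorted_list_of_set B"
  have set_xs: "set xs = B" using assms by (simp add: xs_def)
  have sorted_xs: "sorted_wrt (<) xs" by (simp add: xs_def strict_sorted_list_of_set)
  have nth_less_iff: "xs ! i < xs ! j \<longleftrightarrow> i < j" if "i < length xs" "j < length xs" for i j
    using sorted_xs that by (metis linorder_neqE_nat not_less_iff_gr_or_eq sorted_wrt_nth_less)
  show ?thesis
    unfolding xs_def[symmetric]
  proof
    assume xy: "consecutive_in B x y"
    then have "x \<in> set xs" "y \<in> set xs" unfolding set_xs consecutive_in_def by simp_all
    then obtain i j where ij: "i < length xs" "x = xs ! i" "j < length xs" "y = xs ! j"
      by (auto simp: in_set_conv_nth)
    have "i < j" using nth_less_iff[OF ij(1,3)] xy ij unfolding consecutive_in_def by simp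
    have no_mid: "\<not> (i < m \<and> m < j)" if "m < length xs" for m
    proof
      assume "i < m \<and> m < j"
      then have "x < xs ! m" "xs ! m < y" "xs ! m \<in> B"
        using nth_less_iff[OF ij(1) that] nth_less_iff[OF that ij(3)] ij that set_xs by auto
      then show False using xy unfolding consecutive_in_def by blast
    qed
    have "j = Suc i"
    proof (rule ccontr)
      assume "j \<noteq> Suc i"
      then show False using \<open>i < j\<close> no_mid[of "Suc i"] ij(3) by simp
    qed
    then show "\<exists>i. Suc i < length xs \<and> x = xs ! i \<and> y = xs ! Suc i" using ij by blast
  next
    assume "\<exists>i. Suc i < length xs \<and> x = xs ! i \<and> y = xs ! Suc i"
    then obtain i where i: "Suc i < length xs" "x = xs ! i" "y = xs ! Suc i" by blast
    have "\<not> (x < z \<and> z < y)" if z_in: "z \<in> B" for z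
    proof
      assume z: "x < z \<and> z < y"
      obtain m where m: "m < length xs" "z = xs ! m" using z_in[folded set_xs] by (auto simp: in_set_conv_nth)
      have "i < m" using nth_less_iff[of i m] i m z by simp
      moreover have "m < Suc i" using nth_less_iff[of m "Suc i"] i m z by simp
      ultimately show False by simp
    qed
    moreover have "x < y" using nth_less_iff[of i "Suc i"] i by simp
    moreover have "x \<in> B" "y \<in> B" unfolding set_xs[symmetric] i(2,3) using i(1) by simp_all
    ultimately show "consecutive_in B x y" unfolding consecutive_in_def by blast
  qed
qed

lemma alternating_block_iff_consecutive:
  assumes "finite B"
  shows "alternating_block s B \<longleftrightarrow>
           (\<forall>x y. consecutive_in B x y \<longrightarrow> s ! (x - 1) \<noteq> s ! (y - 1))"
proof -
  define xs where "xs = sorted_list_of_set B"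
  note consec = consecutive_in_iff_adjacent_in_sorted_list[OF assms, folded xs_def]
  show ?thesis
    unfolding alternating_block_def xs_def[symmetric] Let_def
  proof (intro iffI allI impI)
    fix x y assume alt: "\<forall>i. Suc i < length xs \<longrightarrow> s ! (xs ! i - 1) \<noteq> s ! (xs ! Suc i - 1)"
      and xy: "consecutive_in B x y"
    obtain i where i: "Suc i < length xs" "x = xs ! i" "y = xs ! Suc i" using xy[unfolded consec] by blast
    then show "s ! (x - 1) \<noteq> s ! (y - 1)" using alt by blast
  next
    fix i assume alt: "\<forall>x y. consecutive_in B x y \<longrightarrow> s ! (x - 1) \<noteq> s ! (y - 1)"
      and i: "Suc i < length xs"
    have "consecutive_in B (xs ! i) (xs ! Suc i)" unfolding consec using i by blast
    then show "s ! (xs ! i - 1) \<noteq> s ! (xs ! Suc i - 1)" using alt by blast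
  qed
qed

lemma noncrossingD:
  assumes "noncrossing P" "B \<in> P" "B' \<in> P" "B \<noteq> B'" "a < b" "b < c" "c < d"
    "a \<in> B" "c \<in> B" "b \<in> B'" "d \<in> B'"
  shows False
proof -
  have "\<exists>a b c d. a < b \<and> b < c \<and> c < d \<and> a \<in> B \<and> c \<in> B \<and> b \<in> B' \<and> d \<in> B'"
    using assms(5-) by (intro exI conjI)
  with assms(1)[unfolded noncrossing_def, rule_format, OF assms(2-4)] show False by (rule notE)
qed

lemma partition_on_block_eq:
  assumes "partition_on A P" "Y \<in> P" "Z \<in> P" "x \<in> Y" "x \<in> Z"
  shows "Y = Z"
  using disjointD[OF partition_onD2[OF assms(1)] assms(2,3)] assms(4,5) by blast

lemma partition_on_subset_imp_eq:
  assumes P: "partition_on A P" and Q: "partition_on A Q" and "P \<subseteq> Q"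
  shows "P = Q"
proof
  show "Q \<subseteq> P"
  proof
    fix Z assume Z: "Z \<in> Q"
    then obtain z where z: "z \<in> Z" using partition_onD3[OF Q] by (metis ex_in_conv)
    have "z \<in> \<Union>P" using Z z partition_onD1[OF P] partition_onD1[OF Q] by auto
    then obtain Y where Y: "Y \<in> P" "z \<in> Y" by blast
    then have "Y = Z" using partition_on_block_eq[OF Q _ Z _ z] \<open>P \<subseteq> Q\<close> by blast
    then show "Z \<in> P" using Y by simp
  qed
qed (rule \<open>P \<subseteq> Q\<close>)

lemma noncrossing_gap_eq_Union:
  assumes part: "partition_on A P" and nc: "noncrossing P" and Y: "Y \<in> P"
    and xy: "consecutive_in Y x y" and gap: "{x<..<y} \<subseteq> A"
  shows "{x<..<y} = \<Union>{Z \<in> P. Z \<subseteq> {x<..<y}}"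
proof
  show "{x<..<y} \<subseteq> \<Union>{Z \<in> P. Z \<subseteq> {x<..<y}}"
  proof
    fix i assume i: "i \<in> {x<..<y}"
    then have "i \<in> \<Union>P" using gap partition_onD1[OF part] by blast
    then obtain Z where Z: "Z \<in> P" "i \<in> Z" by blast
    have x: "x \<in> Y" "x < i" and y: "y \<in> Y" "i < y" and i_notin: "i \<notin> Y"
      using i xy unfolding consecutive_in_def by auto
    then have "Z \<noteq> Y" using Z by blast
    have "x \<notin> Z" "y \<notin> Z" using partition_on_block_eq[OF part Y Z(1)] x(1) y(1) \<open>Z \<noteq> Y\<close> by auto
    have "w \<in> {x<..<y}" if w: "w \<in> Z" for w
    proof (rule ccontr)
      assume "w \<notin> {x<..<y}"
      moreover have "w \<noteq> x" "w \<noteq> y" using w \<open>x \<notin> Z\<close> \<open>y \<notin> Z\<close> by auto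
      ultimately have "w < x \<or> y < w" by auto
      then show False
      proof
        assume "w < x"
        then show False by (rule noncrossingD[OF nc Z(1) Y \<open>Z \<noteq> Y\<close> _ x(2) y(2) w Z(2) x(1) y(1)])
      next
        assume "y < w"
        then show False by (rule noncrossingD[OF nc Y Z(1) \<open>Z \<noteq> Y\<close>[symmetric] x(2) y(2) _ x(1) y(1) Z(2) w])
      qed
    qed
    then show "i \<in> \<Union>{Z \<in> P. Z \<subseteq> {x<..<y}}" using Z by blast
  qed
qed auto

lemma noncrossing_gap_sum_eq_0:
  fixes f :: "nat \<Rightarrow> 'a::comm_monoid_add"
  assumes part: "partition_on A P" and nc: "noncrossing P" and Y: "Y \<in> P"
    and xy: "consecutive_in Y x y" and gap: "{x<..<y} \<subseteq> A"
    and zero: "\<And>Z. Z \<in> P \<Longrightarrow> sum f Z = 0"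
  shows "sum f {x<..<y} = 0"
proof -
  let ?Q = "{Z \<in> P. Z \<subseteq> {x<..<y}}"
  have "partition_on {x<..<y} ?Q"
  proof (rule partition_onI)
    show "\<Union>?Q = {x<..<y}" using noncrossing_gap_eq_Union[OF assms(1-5)] by (rule sym)
    show "disjnt Z Z'" if "Z \<in> ?Q" "Z' \<in> ?Q" "Z \<noteq> Z'" for Z Z'
      using that partition_on_block_eq[OF part, of Z Z'] unfolding disjnt_def by auto
    show "{} \<notin> ?Q" using partition_onD3[OF part] by blast
  qed
  then have "sum f {x<..<y} = (\<Sum>Z\<in>?Q. sum f Z)" by (rule sum.partition[OF finite_greaterThanLessThan])
  also have "\<dots> = 0" using zero by simp
  finally show ?thesis .
qed

lemma consecutive_in_pair:
  assumes "u < v"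
  shows "consecutive_in {u, v} x y \<longleftrightarrow> x = u \<and> y = v"
  using assms unfolding consecutive_in_def by auto

lemma consecutive_in_quadruple:
  assumes "p1 < p2" "p2 < p3" "p3 < p4" "consecutive_in {p1, p2, p3, p4} x y"
  shows "x = p1 \<and> y = p2 \<or> x = p2 \<and> y = p3 \<or> x = p3 \<and> y = p4"
  using assms unfolding consecutive_in_def by auto

locale four_runs =
  fixes n1 m1 n2 m2 :: nat
  assumes n1_pos: "1 \<le> n1" and m1_pos: "1 \<le> m1" and n2_pos: "1 \<le> n2" and m2_pos: "1 \<le> m2"
    and balanced: "n1 + n2 = m1 + m2"
begin

abbreviation N :: nat where "N \<equiv> n1 + m1 + n2 + m2"

abbreviation S :: "bool list" where "S \<equiv> word4 n1 m1 n2 m2"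

definition is_one :: "nat \<Rightarrow> bool" where
  "is_one i \<longleftrightarrow> i \<le> n1 \<or> n1 + m1 < i \<and> i \<le> n1 + m1 + n2"

definition run :: "nat \<Rightarrow> nat" where
  "run i = (if i \<le> n1 then 0 else if i \<le> n1 + m1 then 1 else if i \<le> n1 + m1 + n2 then 2 else 3)"

lemma length_S: "length S = N"
  by (simp add: word4_def)

lemma S_nth: "1 \<le> i \<Longrightarrow> i \<le> N \<Longrightarrow> S ! (i - 1) = is_one i"
  by (cases "i \<le> n1"; cases "i \<le> n1 + m1"; cases "i \<le> n1 + m1 + n2")
     (auto simp: word4_def nth_append is_one_def)

lemma is_one_iff_even_run: "is_one i \<longleftrightarrow> even (run i)"
  by (auto simp: is_one_def run_def)

lemma run_mono: "i \<le> i' \<Longrightarrow> run i \<le> run i'"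
  by (auto simp: run_def)

definition sign :: "nat \<Rightarrow> int" where
  "sign i = (if is_one i then 1 else -1)"

definition height :: "nat \<Rightarrow> int" where
  "height k = (if k \<le> n1 then int k
     else if k \<le> n1 + m1 then 2 * int n1 - int k
     else if k \<le> n1 + m1 + n2 then int k - 2 * int m1
     else 2 * int n1 + 2 * int n2 - int k)"

lemma sum_sign_eq_height: "k \<le> N \<Longrightarrow> (\<Sum>i = 1..k. sign i) = height k"
proof (induction k)
  case (Suc k)
  have "(\<Sum>i = 1..Suc k. sign i) = sign (Suc k) + height k"
    using Suc by (simp add: atLeastAtMostSuc_conv add.commute)
  also have "\<dots> = height (Suc k)"
    using Suc.prems balanced by (auto simp: height_def sign_def is_one_def)
  finally show ?case .
qed (simp add: height_def)

lemma sum_sign_gap: "x < y \<Longrightarrow> y \<le> N \<Longrightarrow> (\<Sum>i\<in>{x<..<y}. sign i) = height (y - 1) - height x"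
proof -
  assume xy: "x < y" "y \<le> N"
  have "{1..y - 1} = {1..x} \<union> {x<..<y}" using xy by auto
  then have "(\<Sum>i = 1..y - 1. sign i) = (\<Sum>i = 1..x. sign i) + (\<Sum>i\<in>{x<..<y}. sign i)"
    by (simp add: sum.union_disjoint ivl_disj_int)
  moreover have "y - 1 \<le> N" "x \<le> N" using xy by auto
  ultimately show ?thesis using sum_sign_eq_height[of "y - 1"] sum_sign_eq_height[of x] by simp
qed

lemma height_A: "k \<le> n1 \<Longrightarrow> height k = int k"
  by (simp add: height_def)

lemma height_B: "n1 \<le> k \<Longrightarrow> k \<le> n1 + m1 \<Longrightarrow> height k = 2 * int n1 - int k"
  by (auto simp: height_def)

lemma height_C: "n1 + m1 \<le> k \<Longrightarrow> k \<le> n1 + m1 + n2 \<Longrightarrow> height k = int k - 2 * int m1"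
  by (auto simp: height_def)

lemma height_D: "n1 + m1 + n2 \<le> k \<Longrightarrow> height k = 2 * int n1 + 2 * int n2 - int k"
  using balanced by (auto simp: height_def)

lemma partner_sum:
  assumes xy: "1 \<le> x" "x < y" "y \<le> N" and letters: "is_one x \<noteq> is_one y"
    and level: "height (y - 1) = height x"
  shows "x \<le> n1 \<and> n1 < y \<and> y \<le> n1 + m1 \<and> x + y = 2 * n1 + 1
    \<or> x \<le> n1 \<and> n1 + m1 + n2 < y \<and> x + y = N + 1
    \<or> n1 < x \<and> x \<le> n1 + m1 \<and> n1 + m1 < y \<and> y \<le> n1 + m1 + n2 \<and> x + y = 2 * (n1 + m1) + 1
    \<or> n1 + m1 < x \<and> x \<le> n1 + m1 + n2 \<and> n1 + m1 + n2 < y \<and> x + y = 2 * (n1 + m1 + n2) + 1"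
proof -
  have y1: "int (y - 1) = int y - 1" using xy by simp
  consider (A) "x \<le> n1" | (B) "n1 < x" "x \<le> n1 + m1" | (C) "n1 + m1 < x" "x \<le> n1 + m1 + n2"
    | (D) "n1 + m1 + n2 < x"
    by linarith
  then show ?thesis
  proof cases
    case A
    then consider (yB) "n1 < y" "y \<le> n1 + m1" | (yD) "n1 + m1 + n2 < y"
      using letters xy by (auto simp: is_one_def)
    then show ?thesis
    proof cases
      case yB
      have "height (y - 1) = 2 * int n1 - int (y - 1)" using yB by (intro height_B) auto
      then have "x + y = 2 * n1 + 1" using level height_A[OF A] y1 by linarith
      then show ?thesis using A yB by simp
    next
      case yD
      have "height (y - 1) = 2 * int n1 + 2 * int n2 - int (y - 1)" using yD by (intro height_D) auto
      then have "x + y = N + 1" using level height_A[OF A] y1 balanced by linarith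
      then show ?thesis using A yD by simp
    qed
  next
    case B
    then have y: "n1 + m1 < y" "y \<le> n1 + m1 + n2" using letters xy by (auto simp: is_one_def)
    have "height x = 2 * int n1 - int x" using B by (intro height_B) auto
    moreover have "height (y - 1) = int (y - 1) - 2 * int m1" using y B by (intro height_C) auto
    ultimately have "x + y = 2 * (n1 + m1) + 1" using level y1 by simp
    then show ?thesis using B y by simp
  next
    case C
    then have y: "n1 + m1 + n2 < y" using letters xy by (auto simp: is_one_def)
    have "height x = int x - 2 * int m1" using C by (intro height_C) auto
    moreover have "height (y - 1) = 2 * int n1 + 2 * int n2 - int (y - 1)" using y by (intro height_D) auto
    ultimately have "x + y = 2 * (n1 + m1 + n2) + 1" using level y1 by simp
    then show ?thesis using C y by simp
  next
    case D
    then show ?thesis using letters xy by (auto simp: is_one_def)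
  qed
qed

definition AD :: "nat \<Rightarrow> nat set" where "AD j = {j + 1, N - j}"
definition BC :: "nat \<Rightarrow> nat set" where "BC b = {b, 2 * (n1 + m1) + 1 - b}"
definition AB :: "nat \<Rightarrow> nat set" where "AB j = {j + 1, 2 * n1 - j}"
definition CD :: "nat \<Rightarrow> nat set" where "CD j = {j + 1 + 2 * m1, N - j}"
definition ABCD :: "nat \<Rightarrow> nat set" where "ABCD j = {j + 1, 2 * n1 - j, j + 1 + 2 * m1, N - j}"

lemma mem_ABCD:
  "k \<le> n1 \<Longrightarrow> x \<in> ABCD k \<longleftrightarrow> x = k + 1 \<or> x + k = 2 * n1 \<or> x = k + 1 + 2 * m1 \<or> x + k = N"
  by (auto simp: ABCD_def)

lemma pair_block_form:
  assumes "1 \<le> x" "x < y" "y \<le> N" "is_one x \<noteq> is_one y" "height (y - 1) = height x"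
  shows "(\<exists>j. j < n1 \<and> j < m2 \<and> {x, y} = AD j)
    \<or> (\<exists>b. n1 < b \<and> b \<le> n1 + m1 \<and> 2 * n1 < b + m2 \<and> {x, y} = BC b)
    \<or> (\<exists>j. j < n1 \<and> n1 \<le> j + m1 \<and> {x, y} = AB j)
    \<or> (\<exists>j. j < m2 \<and> n1 \<le> j + m1 \<and> {x, y} = CD j)"
  using partner_sum[OF assms]
proof (elim disjE conjE)
  assume "x \<le> n1" "n1 < y" "y \<le> n1 + m1" "x + y = 2 * n1 + 1"
  then have "x - 1 < n1" "n1 \<le> (x - 1) + m1" "{x, y} = AB (x - 1)" using assms(1) by (auto simp: AB_def)
  then show ?thesis by blast
next
  assume "x \<le> n1" "n1 + m1 + n2 < y" "x + y = N + 1"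
  then have "x - 1 < n1" "x - 1 < m2" "{x, y} = AD (x - 1)" using assms(1) balanced by (auto simp: AD_def)
  then show ?thesis by blast
next
  assume "n1 < x" "x \<le> n1 + m1" "n1 + m1 < y" "y \<le> n1 + m1 + n2" "x + y = 2 * (n1 + m1) + 1"
  then have "2 * n1 < x + m2" "{x, y} = BC x" using balanced by (auto simp: BC_def)
  then show ?thesis using \<open>n1 < x\<close> \<open>x \<le> n1 + m1\<close> by blast
next
  assume "n1 + m1 < x" "x \<le> n1 + m1 + n2" "n1 + m1 + n2 < y" "x + y = 2 * (n1 + m1 + n2) + 1"
  then have "N - y < m2" "n1 \<le> (N - y) + m1" "{x, y} = CD (N - y)"
    using assms(3) balanced by (auto simp: CD_def)
  then show ?thesis by blast
qed

lemma quad_block_form: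
  assumes runs: "run a = 0" "run b = 1" "run c = 2" "run d = 3" and "1 \<le> a" "d \<le> N"
    and levels: "height (b - 1) = height a" "height (c - 1) = height b" "height (d - 1) = height c"
  shows "\<exists>j. j < n1 \<and> j < m2 \<and> n1 \<le> j + m1 \<and> {a, b, c, d} = ABCD j"
proof -
  have r: "a \<le> n1" "n1 < b" "b \<le> n1 + m1" "n1 + m1 < c" "c \<le> n1 + m1 + n2" "n1 + m1 + n2 < d"
    using runs by (auto simp: run_def split: if_splits)
  have letters: "is_one a \<noteq> is_one b" "is_one b \<noteq> is_one c" "is_one c \<noteq> is_one d"
    using runs by (simp_all add: is_one_iff_even_run)
  have "a + b = 2 * n1 + 1" using partner_sum[OF \<open>1 \<le> a\<close> _ _ letters(1) levels(1)] r assms(6) by auto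
  moreover have "b + c = 2 * (n1 + m1) + 1"
    using partner_sum[OF _ _ _ letters(2) levels(2)] r assms(6) by auto
  moreover have "c + d = 2 * (n1 + m1 + n2) + 1"
    using partner_sum[OF _ _ assms(6) letters(3) levels(3)] r by auto
  ultimately have "a - 1 < n1" "a - 1 < m2" "n1 \<le> (a - 1) + m1" "{a, b, c, d} = ABCD (a - 1)"
    using r assms(5,6) balanced by (auto simp: ABCD_def)
  then show ?thesis by blast
qed

definition std_part :: "nat \<Rightarrow> nat \<Rightarrow> nat set set" where
  "std_part k q = {AD j |j. j < n1 \<and> j < m2 \<and> j < k}
     \<union> {BC b |b. n1 < b \<and> b \<le> n1 + m1 \<and> 2 * n1 < b + k}
     \<union> {AB j |j. j < n1 \<and> n1 \<le> j + m1 \<and> k + q \<le> j}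
     \<union> {CD j |j. j < m2 \<and> n1 \<le> j + m1 \<and> k + q \<le> j}
     \<union> (if q = 1 then {ABCD k} else {})"

definition std_params :: "(nat \<times> nat) set" where
  "std_params = {(k, q). q \<le> 1 \<and> n1 - m1 \<le> k \<and> k + q \<le> min n1 m2}"

lemma AD_in_std_part: "j < n1 \<Longrightarrow> j < m2 \<Longrightarrow> j < k \<Longrightarrow> AD j \<in> std_part k q"
  unfolding std_part_def by blast

lemma BC_in_std_part: "n1 < b \<Longrightarrow> b \<le> n1 + m1 \<Longrightarrow> 2 * n1 < b + k \<Longrightarrow> BC b \<in> std_part k q"
  unfolding std_part_def by blast

lemma AB_in_std_part: "j < n1 \<Longrightarrow> n1 \<le> j + m1 \<Longrightarrow> k + q \<le> j \<Longrightarrow> AB j \<in> std_part k q"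
  unfolding std_part_def by blast

lemma CD_in_std_part: "j < m2 \<Longrightarrow> n1 \<le> j + m1 \<Longrightarrow> k + q \<le> j \<Longrightarrow> CD j \<in> std_part k q"
  unfolding std_part_def by blast

lemma ABCD_in_std_part: "ABCD k \<in> std_part k 1"
  unfolding std_part_def by simp

lemma std_part_block_cases:
  assumes "(k, q) \<in> std_params" "Y \<in> std_part k q"
  shows "Y = ABCD k \<and> q = 1
    \<or> (\<exists>j e. Y = {j + 1, e} \<and> e + j = N \<and> j < n1 \<and> j < m2 \<and> j < k)
    \<or> (\<exists>b e. Y = {b, e} \<and> b + e = 2 * (n1 + m1) + 1 \<and> n1 < b \<and> b \<le> n1 + m1 \<and> 2 * n1 < b + k)
    \<or> (\<exists>j e. Y = {j + 1, e} \<and> e + j = 2 * n1 \<and> j < n1 \<and> n1 \<le> j + m1 \<and> k + q \<le> j)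
    \<or> (\<exists>j e. Y = {j + 1 + 2 * m1, e} \<and> e + j = N \<and> j < m2 \<and> n1 \<le> j + m1 \<and> k + q \<le> j)"
proof -
  from assms(2) show ?thesis unfolding std_part_def
  proof (elim UnE)
    assume "Y \<in> {AD j |j. j < n1 \<and> j < m2 \<and> j < k}"
    then obtain j where "Y = AD j" "j < n1" "j < m2" "j < k" by blast
    then have "Y = {j + 1, N - j} \<and> (N - j) + j = N \<and> j < n1 \<and> j < m2 \<and> j < k"
      by (auto simp: AD_def)
    then show ?thesis by blast
  next
    assume "Y \<in> {BC b |b. n1 < b \<and> b \<le> n1 + m1 \<and> 2 * n1 < b + k}"
    then obtain b where "Y = BC b" "n1 < b" "b \<le> n1 + m1" "2 * n1 < b + k" by blast
    then have "Y = {b, 2 * (n1 + m1) + 1 - b} \<and> b + (2 * (n1 + m1) + 1 - b) = 2 * (n1 + m1) + 1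
        \<and> n1 < b \<and> b \<le> n1 + m1 \<and> 2 * n1 < b + k"
      by (auto simp: BC_def)
    then show ?thesis by blast
  next
    assume "Y \<in> {AB j |j. j < n1 \<and> n1 \<le> j + m1 \<and> k + q \<le> j}"
    then obtain j where "Y = AB j" "j < n1" "n1 \<le> j + m1" "k + q \<le> j" by blast
    then have "Y = {j + 1, 2 * n1 - j} \<and> (2 * n1 - j) + j = 2 * n1 \<and> j < n1 \<and> n1 \<le> j + m1 \<and> k + q \<le> j"
      by (auto simp: AB_def)
    then show ?thesis by blast
  next
    assume "Y \<in> {CD j |j. j < m2 \<and> n1 \<le> j + m1 \<and> k + q \<le> j}"
    then obtain j where "Y = CD j" "j < m2" "n1 \<le> j + m1" "k + q \<le> j" by blast
    then have "Y = {j + 1 + 2 * m1, N - j} \<and> (N - j) + j = N \<and> j < m2 \<and> n1 \<le> j + m1 \<and> k + q \<le> j"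
      by (auto simp: CD_def)
    then show ?thesis by blast
  next
    assume "Y \<in> (if q = 1 then {ABCD k} else {})"
    then show ?thesis by (auto split: if_splits)
  qed
qed

definition std_block :: "nat \<Rightarrow> nat \<Rightarrow> nat \<Rightarrow> nat set" where
  "std_block k q i =
    (if i \<le> n1 then
       (if i \<le> k then AD (i - 1) else if i = k + 1 \<and> q = 1 then ABCD k else AB (i - 1))
     else if i \<le> n1 + m1 then
       (if 2 * n1 < i + k then BC i else if i + k = 2 * n1 \<and> q = 1 then ABCD k else AB (2 * n1 - i))
     else if i \<le> n1 + m1 + n2 then
       (if i < 2 * m1 + 1 + k then BC (2 * (n1 + m1) + 1 - i)
        else if i = 2 * m1 + 1 + k \<and> q = 1 then ABCD k else CD (i - 1 - 2 * m1))
     else (if N < i + k then AD (N - i) else if i + k = N \<and> q = 1 then ABCD k else CD (N - i)))"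

lemma std_block_AD:
  assumes "j < n1" "j < m2" "j < k" "y \<in> AD j"
  shows "std_block k q y = AD j"
proof -
  have "y = j + 1 \<or> y = N - j" using assms by (auto simp: AD_def)
  then show ?thesis
  proof
    assume y: "y = N - j"
    have "\<not> y \<le> n1 + m1 + n2" "N < y + k" "N - y = j" using assms y by auto
    then show ?thesis using y by (simp add: std_block_def)
  qed (use assms in \<open>simp add: std_block_def\<close>)
qed

lemma std_block_BC:
  assumes "n1 < b" "b \<le> n1 + m1" "2 * n1 < b + k" "k \<le> m2" "y \<in> BC b"
  shows "std_block k q y = BC b"
proof -
  have "y = b \<or> y = 2 * (n1 + m1) + 1 - b" using assms by (auto simp: BC_def)
  then show ?thesis
  proof
    assume y: "y = 2 * (n1 + m1) + 1 - b"
    have "\<not> y \<le> n1 + m1" "y \<le> n1 + m1 + n2" "y < 2 * m1 + 1 + k" "2 * (n1 + m1) + 1 - y = b"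
      using assms y balanced n2_pos by auto
    then show ?thesis using y by (simp add: std_block_def)
  qed (use assms in \<open>simp add: std_block_def\<close>)
qed

lemma std_block_AB:
  assumes "j < n1" "n1 \<le> j + m1" "k + q \<le> j" "y \<in> AB j"
  shows "std_block k q y = AB j"
proof -
  have "y = j + 1 \<or> y = 2 * n1 - j" using assms by (auto simp: AB_def)
  then show ?thesis
  proof
    assume "y = j + 1"
    then show ?thesis using assms by (auto simp: std_block_def)
  next
    assume y: "y = 2 * n1 - j"
    have "\<not> y \<le> n1" "y \<le> n1 + m1" "\<not> 2 * n1 < y + k" "\<not> (y + k = 2 * n1 \<and> q = 1)" "2 * n1 - y = j"
      using assms y by auto
    then show ?thesis using y assms by (auto simp: std_block_def)
  qed
qed

lemma std_block_CD:
  assumes "j < m2" "n1 \<le> j + m1" "k + q \<le> j" "y \<in> CD j"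
  shows "std_block k q y = CD j"
proof -
  have "y = j + 1 + 2 * m1 \<or> y = N - j" using assms by (auto simp: CD_def)
  then show ?thesis
  proof
    assume y: "y = j + 1 + 2 * m1"
    have "\<not> y \<le> n1 + m1" "y \<le> n1 + m1 + n2" "\<not> y < 2 * m1 + 1 + k"
      "\<not> (y = 2 * m1 + 1 + k \<and> q = 1)" "y - 1 - 2 * m1 = j"
      using assms y balanced by auto
    then show ?thesis using y assms by (auto simp: std_block_def)
  next
    assume y: "y = N - j"
    have "\<not> y \<le> n1 + m1 + n2" "\<not> N < y + k" "\<not> (y + k = N \<and> q = 1)" "N - y = j"
      using assms y balanced by auto
    then show ?thesis using y assms by (auto simp: std_block_def)
  qed
qed

lemma std_block_ABCD:
  assumes "(k, 1) \<in> std_params" "y \<in> ABCD k"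
  shows "std_block k 1 y = ABCD k"
proof -
  have kq: "n1 - m1 \<le> k" "k + 1 \<le> n1" "k + 1 \<le> m2" using assms by (auto simp: std_params_def)
  have "y = k + 1 \<or> y = 2 * n1 - k \<or> y = k + 1 + 2 * m1 \<or> y = N - k"
    using assms by (auto simp: ABCD_def)
  then show ?thesis
    using kq balanced by (elim disjE) (auto simp: std_block_def)
qed

lemma std_block_unique:
  assumes kq: "(k, q) \<in> std_params" and Y: "Y \<in> std_part k q" and y: "y \<in> Y"
  shows "std_block k q y = Y"
  using Y unfolding std_part_def
proof (elim UnE)
  assume "Y \<in> {AD j |j. j < n1 \<and> j < m2 \<and> j < k}"
  then obtain j where "Y = AD j" "j < n1" "j < m2" "j < k" by blast
  then show ?thesis using std_block_AD y by simp
next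
  assume "Y \<in> {BC b |b. n1 < b \<and> b \<le> n1 + m1 \<and> 2 * n1 < b + k}"
  then obtain b where "Y = BC b" "n1 < b" "b \<le> n1 + m1" "2 * n1 < b + k" by blast
  moreover have "k \<le> m2" using kq by (simp add: std_params_def)
  ultimately show ?thesis using std_block_BC y by simp
next
  assume "Y \<in> {AB j |j. j < n1 \<and> n1 \<le> j + m1 \<and> k + q \<le> j}"
  then obtain j where "Y = AB j" "j < n1" "n1 \<le> j + m1" "k + q \<le> j" by blast
  then show ?thesis using std_block_AB y by simp
next
  assume "Y \<in> {CD j |j. j < m2 \<and> n1 \<le> j + m1 \<and> k + q \<le> j}"
  then obtain j where "Y = CD j" "j < m2" "n1 \<le> j + m1" "k + q \<le> j" by blast
  then show ?thesis using std_block_CD y by simp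
next
  assume "Y \<in> (if q = 1 then {ABCD k} else {})"
  then show ?thesis using std_block_ABCD kq y by (auto split: if_splits)
qed

lemma std_part_block_eq:
  assumes "(k, q) \<in> std_params" "Y \<in> std_part k q" "Y' \<in> std_part k q" "x \<in> Y" "x \<in> Y'"
  shows "Y = Y'"
  using std_block_unique[OF assms(1,2,4)] std_block_unique[OF assms(1,3,5)] by simp

lemma std_part_block_subset:
  assumes "(k, q) \<in> std_params" "Y \<in> std_part k q"
  shows "Y \<subseteq> {1..N}"
  using std_part_block_cases[OF assms] assms(1) balanced
  by (elim disjE exE conjE) (auto simp: std_params_def ABCD_def)

lemma std_part_covers_A_B:
  assumes kq: "(k, q) \<in> std_params" and i: "1 \<le> i" "i \<le> n1 + m1"
  shows "\<exists>Y\<in>std_part k q. i \<in> Y"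
proof -
  have kq': "q \<le> 1" "k + q \<le> n1" "k + q \<le> m2" "n1 - m1 \<le> k" using kq by (auto simp: std_params_def)
  consider "i \<le> k" | "i = k + 1 \<or> i + k = 2 * n1" "q = 1" | "k + q + 1 \<le> i" "i \<le> n1"
    | "2 * n1 < i + k" "n1 < i" | "i + k + q \<le> 2 * n1" "n1 < i"
    using kq' by linarith
  then show ?thesis
  proof cases
    case 1
    then show ?thesis using i kq' by (intro bexI[OF _ AD_in_std_part[of "i - 1"]]) (auto simp: AD_def)
  next
    case 2
    then show ?thesis using ABCD_in_std_part i by (intro bexI[of _ "ABCD k"]) (auto simp: ABCD_def)
  next
    case 3
    then show ?thesis using i kq' by (intro bexI[OF _ AB_in_std_part[of "i - 1"]]) (auto simp: AB_def)
  next
    case 4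
    then show ?thesis using i by (intro bexI[OF _ BC_in_std_part[of i]]) (auto simp: BC_def)
  next
    case 5
    then show ?thesis using i kq' by (intro bexI[OF _ AB_in_std_part[of "2 * n1 - i"]]) (auto simp: AB_def)
  qed
qed

lemma std_part_covers_C_D:
  assumes kq: "(k, q) \<in> std_params" and i: "n1 + m1 < i" "i \<le> N"
  shows "\<exists>Y\<in>std_part k q. i \<in> Y"
proof -
  have kq': "q \<le> 1" "k + q \<le> n1" "k + q \<le> m2" "n1 - m1 \<le> k" using kq by (auto simp: std_params_def)
  consider "i < 2 * m1 + 1 + k" | "i = 2 * m1 + 1 + k \<or> i + k = N" "q = 1"
    | "2 * m1 + 1 + k + q \<le> i" "i \<le> n1 + m1 + n2" | "N < i + k" "n1 + m1 + n2 < i"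
    | "i + k + q \<le> N" "n1 + m1 + n2 < i"
    using kq' balanced by linarith
  then show ?thesis
  proof cases
    case 1
    then show ?thesis using i kq' balanced
      by (intro bexI[OF _ BC_in_std_part[of "2 * (n1 + m1) + 1 - i"]]) (auto simp: BC_def)
  next
    case 2
    then show ?thesis using ABCD_in_std_part i by (intro bexI[of _ "ABCD k"]) (auto simp: ABCD_def)
  next
    case 3
    then show ?thesis using i kq' balanced
      by (intro bexI[OF _ CD_in_std_part[of "i - 1 - 2 * m1"]]) (auto simp: CD_def)
  next
    case 4
    then show ?thesis using i kq' balanced by (intro bexI[OF _ AD_in_std_part[of "N - i"]]) (auto simp: AD_def)
  next
    case 5
    then show ?thesis using i kq' balanced by (intro bexI[OF _ CD_in_std_part[of "N - i"]]) (auto simp: CD_def)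
  qed
qed

lemma std_part_covers:
  assumes "(k, q) \<in> std_params" "1 \<le> i" "i \<le> N"
  shows "\<exists>Y\<in>std_part k q. i \<in> Y"
  using std_part_covers_A_B[OF assms(1,2)] std_part_covers_C_D[OF assms(1) _ assms(3)] by linarith

lemma std_part_partition:
  assumes "(k, q) \<in> std_params"
  shows "partition_on {1..N} (std_part k q)"
proof (rule partition_onI)
  show "\<Union>(std_part k q) = {1..N}"
    using std_part_block_subset[OF assms] std_part_covers[OF assms] by fastforce
  show "disjnt Y Y'" if "Y \<in> std_part k q" "Y' \<in> std_part k q" "Y \<noteq> Y'" for Y Y'
    using std_part_block_eq[OF assms that(1,2)] that(3) unfolding disjnt_def by blast
  show "{} \<notin> std_part k q"
    using std_part_block_cases[OF assms] by (fastforce simp: ABCD_def)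
qed

lemma std_part_noncrossing:
  assumes kq: "(k, q) \<in> std_params"
  shows "noncrossing (std_part k q)"
  unfolding noncrossing_def
proof (intro ballI impI notI)
  fix Y Y' assume Y: "Y \<in> std_part k q" and Y': "Y' \<in> std_part k q" and "Y \<noteq> Y'"
    and crossing: "\<exists>a b c d. a < b \<and> b < c \<and> c < d \<and> a \<in> Y \<and> c \<in> Y \<and> b \<in> Y' \<and> d \<in> Y'"
  from crossing obtain a b c d where "a < b" "b < c" "c < d" "a \<in> Y" "c \<in> Y" "b \<in> Y'" "d \<in> Y'"
    by blast
  moreover have "k + q \<le> n1" "k + q \<le> m2" "n1 - m1 \<le> k" using kq by (auto simp: std_params_def)
  ultimately show False
    using std_part_block_cases[OF kq Y] std_part_block_cases[OF kq Y'] balanced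
    by (elim disjE exE conjE) (simp_all add: mem_ABCD, use \<open>Y \<noteq> Y'\<close> in simp, linarith+)
qed

lemma alternating_blockI:
  assumes "Y \<subseteq> {1..N}" "\<And>x y. consecutive_in Y x y \<Longrightarrow> is_one x \<noteq> is_one y"
  shows "alternating_block S Y"
proof -
  have "finite Y" using assms(1) finite_subset by blast
  moreover have "S ! (x - 1) \<noteq> S ! (y - 1)" if xy: "consecutive_in Y x y" for x y
  proof -
    have "x \<in> {1..N}" "y \<in> {1..N}" using xy assms(1) unfolding consecutive_in_def by auto
    then show ?thesis using S_nth[of x] S_nth[of y] assms(2)[OF xy] by simp
  qed
  ultimately show ?thesis by (simp add: alternating_block_iff_consecutive)
qed

lemma std_part_pair_block:
  assumes kq: "(k, q) \<in> std_params" and Y: "Y \<in> std_part k q" and "\<not> (Y = ABCD k \<and> q = 1)"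
  shows "\<exists>u v. Y = {u, v} \<and> u < v \<and> is_one u \<noteq> is_one v"
proof -
  have "k \<le> m2" using kq by (auto simp: std_params_def)
  from std_part_block_cases[OF kq Y] show ?thesis
  proof (elim disjE exE conjE)
    fix j e assume "Y = {j + 1, e}" "e + j = N" "j < n1" "j < m2"
    then show ?thesis using balanced by (intro exI[of _ "j + 1"] exI[of _ e]) (auto simp: is_one_def)
  next
    fix b e assume "Y = {b, e}" "b + e = 2 * (n1 + m1) + 1" "n1 < b" "b \<le> n1 + m1" "2 * n1 < b + k"
    then show ?thesis using balanced \<open>k \<le> m2\<close> by (intro exI[of _ b] exI[of _ e]) (auto simp: is_one_def)
  next
    fix j e assume "Y = {j + 1, e}" "e + j = 2 * n1" "j < n1" "n1 \<le> j + m1"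
    then show ?thesis by (intro exI[of _ "j + 1"] exI[of _ e]) (auto simp: is_one_def)
  next
    fix j e assume "Y = {j + 1 + 2 * m1, e}" "e + j = N" "j < m2" "n1 \<le> j + m1"
    then show ?thesis using balanced by (intro exI[of _ "j + 1 + 2 * m1"] exI[of _ e]) (auto simp: is_one_def)
  qed (use assms(3) in simp)
qed

lemma ABCD_ordered:
  assumes "(k, 1) \<in> std_params"
  shows "k + 1 < 2 * n1 - k" "2 * n1 - k < k + 1 + 2 * m1" "k + 1 + 2 * m1 < N - k"
  using assms balanced by (auto simp: std_params_def)

lemma std_part_block_alternating:
  assumes kq: "(k, q) \<in> std_params" and Y: "Y \<in> std_part k q"
  shows "alternating_block S Y"
proof (rule alternating_blockI)
  show "Y \<subseteq> {1..N}" by (rule std_part_block_subset[OF kq Y])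
  fix x y assume xy: "consecutive_in Y x y"
  show "is_one x \<noteq> is_one y"
  proof (cases "Y = ABCD k \<and> q = 1")
    case True
    then have "x = k + 1 \<and> y = 2 * n1 - k \<or> x = 2 * n1 - k \<and> y = k + 1 + 2 * m1
        \<or> x = k + 1 + 2 * m1 \<and> y = N - k"
      using consecutive_in_quadruple[OF ABCD_ordered] kq xy by (simp add: ABCD_def)
    then show ?thesis using kq True balanced by (auto simp: is_one_def std_params_def)
  next
    case False
    then show ?thesis using std_part_pair_block[OF kq Y] xy consecutive_in_pair by auto
  qed
qed

lemma card_ABCD:
  assumes "(k, 1) \<in> std_params"
  shows "card (ABCD k) = 4"
  using ABCD_ordered[OF assms] by (simp add: ABCD_def)

lemma std_part_block_card:
  assumes kq: "(k, q) \<in> std_params" and Y: "Y \<in> std_part k q"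
  shows "card Y = (if Y = ABCD k \<and> q = 1 then 4 else 2)"
proof (cases "Y = ABCD k \<and> q = 1")
  case False
  then show ?thesis using std_part_pair_block[OF kq Y] by auto
qed (use card_ABCD kq in auto)

lemma std_part_in_NC:
  assumes "(k, q) \<in> std_params"
  shows "std_part k q \<in> NC S"
  unfolding NC_def
  using std_part_partition[OF assms] std_part_noncrossing[OF assms]
    std_part_block_alternating[OF assms] std_part_block_card[OF assms]
  by (simp add: length_S)

lemma std_part_in_NC2_iff:
  assumes "(k, q) \<in> std_params"
  shows "std_part k q \<in> NC2 S \<longleftrightarrow> q = 0"
proof
  assume NC2: "std_part k q \<in> NC2 S"
  show "q = 0"
  proof (rule ccontr)
    assume "q \<noteq> 0"
    then have "q = 1" using assms by (simp add: std_params_def)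
    then have "ABCD k \<in> std_part k q" "card (ABCD k) = 4"
      using card_ABCD ABCD_in_std_part assms by auto
    then show False using NC2 by (auto simp: NC2_def)
  qed
next
  assume "q = 0"
  then show "std_part k q \<in> NC2 S"
    using std_part_in_NC[OF assms] std_part_block_card[OF assms] by (simp add: NC2_def)
qed

end

locale four_runs_NC = four_runs +
  fixes P :: "nat set set"
  assumes P_in_NC: "P \<in> NC (word4 n1 m1 n2 m2)"
begin

lemma P_partition: "partition_on {1..N} P"
  using P_in_NC length_S by (simp add: NC_def)

lemma P_noncrossing: "noncrossing P"
  using P_in_NC by (simp add: NC_def)

lemma P_block_even: "Y \<in> P \<Longrightarrow> even (card Y)"
  using P_in_NC by (simp add: NC_def)

lemma P_block_subset: "Y \<in> P \<Longrightarrow> Y \<subseteq> {1..N}"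
  using partition_onD1[OF P_partition] by blast

lemma P_block_finite: "Y \<in> P \<Longrightarrow> finite Y"
  using P_block_subset finite_subset by blast

lemma P_block_eq: "Y \<in> P \<Longrightarrow> Z \<in> P \<Longrightarrow> x \<in> Y \<Longrightarrow> x \<in> Z \<Longrightarrow> Y = Z"
  using partition_on_block_eq[OF P_partition] by blast

lemma P_covers: "1 \<le> i \<Longrightarrow> i \<le> N \<Longrightarrow> \<exists>Y\<in>P. i \<in> Y"
  using partition_onD1[OF P_partition] by auto

lemma consecutive_letters_differ:
  assumes Y: "Y \<in> P" and xy: "consecutive_in Y x y"
  shows "is_one x \<noteq> is_one y"
proof -
  have "alternating_block S Y" using P_in_NC Y by (simp add: NC_def)
  then have "S ! (x - 1) \<noteq> S ! (y - 1)"
    using xy alternating_block_iff_consecutive[OF P_block_finite[OF Y]] by blast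
  moreover have "x \<in> {1..N}" "y \<in> {1..N}" using P_block_subset[OF Y] xy unfolding consecutive_in_def by auto
  ultimately show ?thesis using S_nth by simp
qed

text \<open>Runs are intervals on which the letter is constant, so the successor in \<open>Y\<close> of an
  element of \<open>Y\<close> always lies in a later run.\<close>

lemma block_inj_on_run:
  assumes Y: "Y \<in> P"
  shows "inj_on run Y"
proof (rule inj_onI, rule ccontr)
  have less_case: False if xy: "x \<in> Y" "y \<in> Y" "x < y" and same_run: "run x = run y" for x y
  proof -
    obtain z where z: "consecutive_in Y x z" "z \<le> y"
      using consecutive_in_exists[OF P_block_finite[OF Y] xy] .
    then have "run x \<le> run z" "run z \<le> run y" using run_mono unfolding consecutive_in_def by auto
    then have "is_one z = is_one x" using same_run by (simp add: is_one_iff_even_run)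
    then show False using consecutive_letters_differ[OF Y z(1)] by simp
  qed
  fix x y assume "x \<in> Y" "y \<in> Y" "run x = run y" "x \<noteq> y"
  then show False using less_case[of x y] less_case[of y x] by (metis linorder_neqE_nat)
qed

lemma block_cases:
  assumes Y: "Y \<in> P"
  obtains (pair) x y where "Y = {x, y}" "x < y"
  | (quad) a b c d where "Y = {a, b, c, d}" "run a = 0" "run b = 1" "run c = 2" "run d = 3"
proof -
  have "card (run ` Y) = card Y" using card_image[OF block_inj_on_run[OF Y]] .
  moreover have runs: "run ` Y \<subseteq> {0, 1, 2, 3}" by (auto simp: run_def)
  ultimately have "card Y \<le> 4" using card_mono[OF _ runs] by simp
  moreover have "card Y \<noteq> 0" using P_block_finite[OF Y] partition_onD3[OF P_partition] Y by auto
  ultimately have "card Y = 2 \<or> card Y = 4" using P_block_even[OF Y] by presburger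
  then show thesis
  proof
    assume "card Y = 2"
    then obtain x y where "Y = {x, y}" "x \<noteq> y" by (auto simp: card_2_iff)
    then show thesis using pair[of x y] pair[of y x] by (metis insert_commute linorder_neqE_nat)
  next
    assume "card Y = 4"
    then have "run ` Y = {0, 1, 2, 3}"
      using card_subset_eq[OF _ runs] card_image[OF block_inj_on_run[OF Y]] by simp
    then have "0 \<in> run ` Y" "1 \<in> run ` Y" "2 \<in> run ` Y" "3 \<in> run ` Y" by auto
    then obtain a b c d where abcd: "a \<in> Y" "run a = 0" "b \<in> Y" "run b = 1"
      "c \<in> Y" "run c = 2" "d \<in> Y" "run d = 3"
      unfolding image_iff by (metis (no_types))
    have "Y = {a, b, c, d}"
    proof
      show "Y \<subseteq> {a, b, c, d}"
      proof
        fix w assume "w \<in> Y"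
        then have "run w = run a \<or> run w = run b \<or> run w = run c \<or> run w = run d"
          using runs abcd by auto
        then show "w \<in> {a, b, c, d}"
          using inj_onD[OF block_inj_on_run[OF Y] _ \<open>w \<in> Y\<close>] abcd by blast
      qed
    qed (use abcd in auto)
    then show thesis using quad abcd by blast
  qed
qed

lemma block_sum_sign:
  assumes Y: "Y \<in> P"
  shows "sum sign Y = 0"
  using Y
proof (cases rule: block_cases)
  case (pair x y)
  then have "consecutive_in Y x y" using consecutive_in_pair by simp
  then have "is_one x \<noteq> is_one y" using consecutive_letters_differ[OF Y] by blast
  then show ?thesis using pair by (auto simp: sign_def)
next
  case (quad a b c d)
  then have "is_one a" "\<not> is_one b" "is_one c" "\<not> is_one d" by (auto simp: is_one_iff_even_run)
  moreover have "distinct [a, b, c, d]" using quad by auto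
  ultimately show ?thesis using quad by (simp add: sign_def)
qed

lemma consecutive_height_eq:
  assumes Y: "Y \<in> P" and xy: "consecutive_in Y x y"
  shows "height (y - 1) = height x"
proof -
  have "x < y" "y \<le> N" using xy P_block_subset[OF Y] unfolding consecutive_in_def by auto
  moreover have "{x<..<y} \<subseteq> {1..N}" using \<open>y \<le> N\<close> by auto
  then have "sum sign {x<..<y} = 0"
    using noncrossing_gap_sum_eq_0[OF P_partition P_noncrossing Y xy] block_sum_sign by blast
  ultimately show ?thesis using sum_sign_gap by simp
qed

lemma block_form:
  assumes Y: "Y \<in> P"
  shows "(\<exists>j. j < n1 \<and> j < m2 \<and> Y = AD j)
    \<or> (\<exists>b. n1 < b \<and> b \<le> n1 + m1 \<and> 2 * n1 < b + m2 \<and> Y = BC b)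
    \<or> (\<exists>j. j < n1 \<and> n1 \<le> j + m1 \<and> Y = AB j)
    \<or> (\<exists>j. j < m2 \<and> n1 \<le> j + m1 \<and> Y = CD j)
    \<or> (\<exists>j. j < n1 \<and> j < m2 \<and> n1 \<le> j + m1 \<and> Y = ABCD j)"
  using Y
proof (cases rule: block_cases)
  case (pair x y)
  then have xy: "consecutive_in Y x y" using consecutive_in_pair by simp
  have "1 \<le> x" "y \<le> N" using P_block_subset[OF Y] pair by auto
  from pair_block_form[OF this(1) \<open>x < y\<close> this(2) consecutive_letters_differ[OF Y xy]
      consecutive_height_eq[OF Y xy]]
  show ?thesis unfolding pair(1) by blast
next
  case (quad a b c d)
  then have "a < b" "b < c" "c < d" by (auto simp: run_def split: if_splits)
  then have "consecutive_in Y a b" "consecutive_in Y b c" "consecutive_in Y c d"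
    using quad(1) unfolding consecutive_in_def by auto
  then have "height (b - 1) = height a" "height (c - 1) = height b" "height (d - 1) = height c"
    using consecutive_height_eq[OF Y] by blast+
  moreover have "1 \<le> a" "d \<le> N" using P_block_subset[OF Y] quad(1) by auto
  ultimately have "\<exists>j. j < n1 \<and> j < m2 \<and> n1 \<le> j + m1 \<and> Y = ABCD j"
    using quad_block_form[OF quad(2-5)] quad(1) by simp
  then show ?thesis by (intro disjI2)
qed

lemma block_of_A_position:
  assumes j: "j < n1" and Y: "Y \<in> P" "j + 1 \<in> Y"
  shows "Y = AD j \<and> j < m2 \<or> Y = AB j \<and> n1 \<le> j + m1 \<or> Y = ABCD j \<and> j < m2 \<and> n1 \<le> j + m1"
  using block_form[OF Y(1)]
proof (elim disjE exE conjE)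
  fix j' assume "j' < n1" "j' < m2" "Y = AD j'"
  moreover from this have "j' = j" using Y j balanced by (auto simp: AD_def)
  ultimately have "Y = AD j \<and> j < m2" by simp
  then show ?thesis by (rule disjI1)
next
  fix b assume "n1 < b" "b \<le> n1 + m1" "Y = BC b"
  then have False using Y j balanced by (auto simp: BC_def)
  then show ?thesis ..
next
  fix j' assume "j' < n1" "n1 \<le> j' + m1" "Y = AB j'"
  moreover from this have "j' = j" using Y j by (auto simp: AB_def)
  ultimately have "Y = AB j \<and> n1 \<le> j + m1" by simp
  then show ?thesis by (rule disjI2[OF disjI1])
next
  fix j' assume "j' < m2" "n1 \<le> j' + m1" "Y = CD j'"
  then have False using Y j balanced by (auto simp: CD_def)
  then show ?thesis ..
next
  fix j' assume "j' < n1" "j' < m2" "n1 \<le> j' + m1" "Y = ABCD j'"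
  moreover from this have "j' = j" using Y j balanced by (auto simp: ABCD_def)
  ultimately have "Y = ABCD j \<and> j < m2 \<and> n1 \<le> j + m1" by simp
  then show ?thesis by (rule disjI2[OF disjI2])
qed

lemma level_block_in_P:
  assumes "j < n1" "j < m2" "n1 \<le> j + m1"
  shows "AD j \<in> P \<or> AB j \<in> P \<or> ABCD j \<in> P"
proof -
  obtain Y where "Y \<in> P" "j + 1 \<in> Y" using P_covers[of "j + 1"] assms by auto
  then show ?thesis using block_of_A_position[OF assms(1)] by blast
qed

lemma level_blocks_exclusive:
  assumes "j < n1" "j < m2" "n1 \<le> j + m1"
  shows "\<not> (AD j \<in> P \<and> AB j \<in> P)" "\<not> (AD j \<in> P \<and> ABCD j \<in> P)" "\<not> (AB j \<in> P \<and> ABCD j \<in> P)"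
proof -
  have "j + 1 \<in> AD j" "j + 1 \<in> AB j" "j + 1 \<in> ABCD j" by (simp_all add: AD_def AB_def ABCD_def)
  moreover have "AD j \<noteq> AB j" "AD j \<noteq> ABCD j" "AB j \<noteq> ABCD j"
  proof -
    have "N - j \<notin> AB j" "2 * n1 - j \<notin> AD j" using assms balanced by (auto simp: AB_def AD_def)
    then show "AD j \<noteq> AB j" "AD j \<noteq> ABCD j" "AB j \<noteq> ABCD j"
      by (auto simp: AD_def ABCD_def)
  qed
  ultimately show "\<not> (AD j \<in> P \<and> AB j \<in> P)" "\<not> (AD j \<in> P \<and> ABCD j \<in> P)"
    "\<not> (AB j \<in> P \<and> ABCD j \<in> P)"
    using P_block_eq by blast+
qed

lemma A_to_B_below_A_to_D_crosses:
  assumes X: "X \<in> P" "j + 1 \<in> X" "2 * n1 - j \<in> X" and X': "X' \<in> P" "j' + 1 \<in> X'" "N - j' \<in> X'"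
    and jj: "j < j'" "j' < n1" "j' < m2" "n1 \<le> j + m1"
  shows False
proof -
  have "X \<noteq> X'"
  proof
    assume "X = X'"
    then have "j + 1 = j' + 1"
      using inj_onD[OF block_inj_on_run[OF X(1)], of "j + 1" "j' + 1"] X X' jj by (auto simp: run_def)
    then show False using jj by simp
  qed
  moreover have "j + 1 < j' + 1" "j' + 1 < 2 * n1 - j" "2 * n1 - j < N - j'" using jj balanced by auto
  ultimately show False using noncrossingD[OF P_noncrossing X(1) X'(1)] X X' by blast
qed

definition k_P :: nat where
  "k_P = (if {j. n1 - m1 \<le> j \<and> j < min n1 m2 \<and> AD j \<notin> P} = {} then min n1 m2
          else Min {j. n1 - m1 \<le> j \<and> j < min n1 m2 \<and> AD j \<notin> P})"

definition q_P :: nat where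
  "q_P = (if k_P < min n1 m2 \<and> ABCD k_P \<in> P then 1 else 0)"

lemma k_P_cases:
  "n1 - m1 \<le> k_P \<and> k_P \<le> min n1 m2 \<and> (\<forall>j. n1 - m1 \<le> j \<and> j < k_P \<longrightarrow> AD j \<in> P)
    \<and> (k_P < min n1 m2 \<longrightarrow> AD k_P \<notin> P)"
proof -
  define J where "J = {j. n1 - m1 \<le> j \<and> j < min n1 m2 \<and> AD j \<notin> P}"
  have "finite J" by (rule finite_subset[of _ "{..<min n1 m2}"]) (auto simp: J_def)
  show ?thesis
  proof (cases "J = {}")
    case True
    then show ?thesis using balanced unfolding k_P_def J_def[symmetric] by (auto simp: J_def)
  next
    case False
    then have k: "k_P = Min J" unfolding k_P_def J_def[symmetric] by simp
    have "Min J \<in> J" "\<forall>j\<in>J. Min J \<le> j" using False \<open>finite J\<close> by auto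
    then have min: "n1 - m1 \<le> Min J" "Min J < min n1 m2" "AD (Min J) \<notin> P" unfolding J_def by auto
    have "AD j \<in> P" if "n1 - m1 \<le> j" "j < Min J" for j
    proof (rule ccontr)
      assume "AD j \<notin> P"
      then have "j \<in> J" using that min(2) unfolding J_def by auto
      then show False using \<open>\<forall>j\<in>J. Min J \<le> j\<close> that(2) by auto
    qed
    then show ?thesis using min unfolding k by auto
  qed
qed

lemma k_P_bounds: "n1 - m1 \<le> k_P" "k_P \<le> min n1 m2"
  using k_P_cases by auto

lemma AD_below_k_P: "n1 - m1 \<le> j \<Longrightarrow> j < k_P \<Longrightarrow> AD j \<in> P"
  using k_P_cases by blast

lemma AD_not_above_k_P:
  assumes "k_P \<le> j" "j < min n1 m2"
  shows "AD j \<notin> P"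
proof
  assume AD: "AD j \<in> P"
  have k: "k_P < min n1 m2" "n1 \<le> k_P + m1" using assms k_P_bounds by auto
  then have "AD k_P \<notin> P" using k_P_cases by blast
  then have "AB k_P \<in> P \<or> ABCD k_P \<in> P" using level_block_in_P[of k_P] k by auto
  then obtain X where X: "X \<in> P" "k_P + 1 \<in> X" "2 * n1 - k_P \<in> X"
    by (auto simp: AB_def ABCD_def)
  show False
  proof (cases "j = k_P")
    case True
    then show False using \<open>AD k_P \<notin> P\<close> AD by simp
  next
    case False
    then show False
      using A_to_B_below_A_to_D_crosses[OF X AD, of j] assms k by (auto simp: AD_def)
  qed
qed

lemma AB_above_k_P:
  assumes "k_P + q_P \<le> j" "j < min n1 m2"
  shows "AB j \<in> P"
proof -
  have j: "j < n1" "j < m2" "n1 \<le> j + m1" using assms k_P_bounds by auto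
  have "AD j \<notin> P" using AD_not_above_k_P assms by simp
  then have "AB j \<in> P \<or> ABCD j \<in> P" using level_block_in_P[OF j] by simp
  moreover have "ABCD j \<notin> P"
  proof
    assume Q: "ABCD j \<in> P"
    then have "j \<noteq> k_P" using assms q_P_def by auto
    then have "k_P < min n1 m2" "k_P < j" using assms by auto
    then have "AD k_P \<notin> P" "n1 \<le> k_P + m1" using k_P_cases k_P_bounds by auto
    then have "AB k_P \<in> P \<or> ABCD k_P \<in> P" using level_block_in_P[of k_P] \<open>k_P < min n1 m2\<close> by auto
    then obtain X where X: "X \<in> P" "k_P + 1 \<in> X" "2 * n1 - k_P \<in> X"
      by (auto simp: AB_def ABCD_def)
    show False
      using A_to_B_below_A_to_D_crosses[OF X Q, of j] \<open>k_P < j\<close> j \<open>n1 \<le> k_P + m1\<close>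
      by (auto simp: ABCD_def)
  qed
  ultimately show ?thesis by simp
qed

lemma AB_in_P_above_k_P:
  assumes "AB j \<in> P" "j < n1" "n1 \<le> j + m1"
  shows "k_P + q_P \<le> j"
proof (rule ccontr)
  assume "\<not> k_P + q_P \<le> j"
  moreover have "q_P = 0 \<or> q_P = 1" by (simp add: q_P_def)
  ultimately consider "j < k_P" | "j = k_P" "q_P = 1" by linarith
  then show False
  proof cases
    case 1
    then have "AD j \<in> P" "j < m2" using AD_below_k_P k_P_bounds assms by auto
    then show False using level_blocks_exclusive(1)[of j] assms by simp
  next
    case 2
    then have "ABCD j \<in> P" "j < m2" by (auto simp: q_P_def split: if_splits)
    then show False using level_blocks_exclusive(3)[of j] assms by simp
  qed
qed

lemma P_params: "(k_P, q_P) \<in> std_params"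
  using k_P_bounds by (auto simp: std_params_def q_P_def)

lemma AD_in_P_below_k_P:
  assumes "AD j \<in> P" "j < n1" "j < m2"
  shows "j < k_P"
  using AD_not_above_k_P[of j] assms by (cases "k_P \<le> j") auto

lemma BC_in_P_above_level:
  assumes Y: "BC b \<in> P" and b: "n1 < b" "b \<le> n1 + m1" "2 * n1 < b + m2"
  shows "2 * n1 < b + k_P"
proof (rule ccontr)
  assume "\<not> 2 * n1 < b + k_P"
  define j where "j = 2 * n1 - b"
  have j: "k_P \<le> j" "j < n1" "j < m2" "n1 \<le> j + m1" "2 * n1 - j = b"
    using \<open>\<not> 2 * n1 < b + k_P\<close> b by (auto simp: j_def)
  then have "AD j \<notin> P" using AD_not_above_k_P by simp
  then have "AB j \<in> P \<or> ABCD j \<in> P" using level_block_in_P[OF j(2-4)] by simp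
  then obtain X where X: "X \<in> P" "j + 1 \<in> X" "b \<in> X"
    using j(5) by (auto simp: AB_def ABCD_def)
  moreover have "b \<in> BC b" "j + 1 \<notin> BC b" using b j by (auto simp: BC_def)
  ultimately show False using P_block_eq[OF X(1) Y] by blast
qed

lemma CD_in_P_above_k_P:
  assumes Y: "CD j \<in> P" and j: "j < m2" "n1 \<le> j + m1"
  shows "k_P + q_P \<le> j"
proof (cases "j < n1")
  case True
  have "N - j \<in> CD j" "j + 1 \<notin> CD j" using j m1_pos n2_pos balanced by (auto simp: CD_def)
  moreover have "N - j \<in> AD j" "j + 1 \<in> AD j" "N - j \<in> ABCD j" "j + 1 \<in> ABCD j"
    by (auto simp: AD_def ABCD_def)
  ultimately have "AD j \<notin> P" "ABCD j \<notin> P" using P_block_eq[OF _ Y] by blast+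
  then have "AB j \<in> P" using level_block_in_P[OF True j(1,2)] by simp
  then show ?thesis using AB_in_P_above_k_P True j by simp
next
  case False
  then show ?thesis using P_params by (simp add: std_params_def)
qed

lemma ABCD_in_P_at_k_P:
  assumes "ABCD j \<in> P" "j < n1" "j < m2" "n1 \<le> j + m1"
  shows "j = k_P \<and> q_P = 1"
proof -
  have "AD j \<notin> P" "AB j \<notin> P" using level_blocks_exclusive[of j] assms by auto
  moreover have "n1 - m1 \<le> j" using assms by arith
  ultimately have "k_P \<le> j" "\<not> k_P + q_P \<le> j"
    using AD_below_k_P[of j] AB_above_k_P[of j] assms by (meson not_le, auto)
  then show ?thesis using assms by (auto simp: q_P_def split: if_splits)
qed

lemma P_subset_std_part: "P \<subseteq> std_part k_P q_P"
proof
  fix Y assume Y: "Y \<in> P"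
  from block_form[OF Y] show "Y \<in> std_part k_P q_P"
  proof (elim disjE exE conjE)
    fix j assume "j < n1" "j < m2" "Y = AD j"
    then show ?thesis using AD_in_P_below_k_P Y AD_in_std_part by simp
  next
    fix b assume "n1 < b" "b \<le> n1 + m1" "2 * n1 < b + m2" "Y = BC b"
    then show ?thesis using BC_in_P_above_level Y BC_in_std_part by simp
  next
    fix j assume "j < n1" "n1 \<le> j + m1" "Y = AB j"
    then show ?thesis using AB_in_P_above_k_P Y AB_in_std_part by simp
  next
    fix j assume "j < m2" "n1 \<le> j + m1" "Y = CD j"
    then show ?thesis using CD_in_P_above_k_P Y CD_in_std_part by simp
  next
    fix j assume "j < n1" "j < m2" "n1 \<le> j + m1" "Y = ABCD j"
    then show ?thesis using ABCD_in_P_at_k_P Y ABCD_in_std_part by simp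
  qed
qed

lemma P_eq_std_part: "P = std_part k_P q_P"
  using partition_on_subset_imp_eq[OF P_partition std_part_partition[OF P_params] P_subset_std_part] .

end

context four_runs
begin

lemma NC_eq_std_parts: "NC S = (\<lambda>(k, q). std_part k q) ` std_params"
proof
  show "NC S \<subseteq> (\<lambda>(k, q). std_part k q) ` std_params"
  proof
    fix P assume "P \<in> NC S"
    then interpret four_runs_NC n1 m1 n2 m2 P by unfold_locales
    show "P \<in> (\<lambda>(k, q). std_part k q) ` std_params"
      using P_eq_std_part P_params by force
  qed
  show "(\<lambda>(k, q). std_part k q) ` std_params \<subseteq> NC S" using std_part_in_NC by auto
qed

lemma NC2_eq_std_parts: "NC2 S = (\<lambda>(k, q). std_part k q) ` {(k, q) \<in> std_params. q = 0}"
proof -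
  have "NC2 S = {P \<in> NC S. P \<in> NC2 S}" by (auto simp: NC2_def)
  also have "\<dots> = (\<lambda>(k, q). std_part k q) ` {(k, q) \<in> std_params. q = 0}"
    unfolding NC_eq_std_parts using std_part_in_NC2_iff by auto
  finally show ?thesis .
qed

lemma AD_in_std_part_iff:
  assumes kq: "(k, q) \<in> std_params" and j: "n1 - m1 \<le> j" "j < min n1 m2"
  shows "AD j \<in> std_part k q \<longleftrightarrow> j < k"
proof
  assume AD: "AD j \<in> std_part k q"
  show "j < k"
  proof (rule ccontr)
    assume "\<not> j < k"
    then obtain X where X: "X \<in> std_part k q" "j + 1 \<in> X" "X \<noteq> AD j"
    proof (cases "j = k \<and> q = 1")
      case True
      have "2 * n1 - k \<in> ABCD k" "2 * n1 - k \<notin> AD j" using True j balanced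
        by (auto simp: ABCD_def AD_def)
      moreover have "ABCD k \<in> std_part k q" "j + 1 \<in> ABCD k"
        using True ABCD_in_std_part by (auto simp: ABCD_def)
      ultimately show thesis using that[of "ABCD k"] by blast
    next
      case False
      then have "k + q \<le> j" using \<open>\<not> j < k\<close> kq by (auto simp: std_params_def)
      then have "AB j \<in> std_part k q" using j by (intro AB_in_std_part) auto
      moreover have "N - j \<in> AD j" "N - j \<notin> AB j" "j + 1 \<in> AB j"
        using j balanced by (auto simp: AD_def AB_def)
      ultimately show thesis using that[of "AB j"] by blast
    qed
    moreover have "j + 1 \<in> AD j" by (simp add: AD_def)
    ultimately show False using std_part_block_eq[OF kq X(1) AD] by blast
  qed
next
  assume "j < k"
  then show "AD j \<in> std_part k q" using j by (intro AD_in_std_part) auto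
qed

lemma std_part_inj_on: "inj_on (\<lambda>(k, q). std_part k q) std_params"
proof (rule inj_onI, clarify)
  fix k q k' q'
  assume kq: "(k, q) \<in> std_params" and kq': "(k', q') \<in> std_params"
    and eq: "std_part k q = std_part k' q'"
  have "k = k'"
  proof (rule ccontr)
    assume "k \<noteq> k'"
    then have "min k k' < max k k'" by simp
    moreover have "n1 - m1 \<le> min k k'" "max k k' \<le> min n1 m2" using kq kq' by (auto simp: std_params_def)
    ultimately show False
      using AD_in_std_part_iff[OF kq, of "min k k'"] AD_in_std_part_iff[OF kq', of "min k k'"] eq
      by (auto simp: min_def max_def split: if_splits)
  qed
  moreover have "q = q'"
    using std_part_in_NC2_iff[OF kq] std_part_in_NC2_iff[OF kq'] eq kq kq'
    by (auto simp: std_params_def)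
  ultimately show "k = k' \<and> q = q'" by simp
qed

lemma min_four_eq: "min n1 (min m1 (min n2 m2)) = min n1 m2 - (n1 - m1)"
  using balanced by (simp add: min_def; arith)

lemma card_std_params: "card std_params = 2 * min n1 (min m1 (min n2 m2)) + 1"
proof -
  let ?A = "(\<lambda>k. (k, 0::nat)) ` {n1 - m1..min n1 m2}" and ?B = "(\<lambda>k. (k, 1::nat)) ` {n1 - m1..<min n1 m2}"
  have split: "std_params = ?A \<union> ?B"
  proof (intro equalityI subsetI)
    fix p assume "p \<in> std_params"
    then obtain k q where "p = (k, q)" "q \<le> 1" "n1 - m1 \<le> k" "k + q \<le> min n1 m2"
      by (auto simp: std_params_def)
    then show "p \<in> ?A \<union> ?B" by (cases q) auto
  qed (auto simp: std_params_def)
  have "card std_params = card ?A + card ?B" unfolding split by (rule card_Un_disjoint) auto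
  also have "\<dots> = 2 * (min n1 m2 - (n1 - m1)) + 1"
    using balanced by (simp add: card_image inj_on_def)
  finally show ?thesis unfolding min_four_eq .
qed

lemma card_std_params_0: "card {(k, q) \<in> std_params. q = 0} = min n1 (min m1 (min n2 m2)) + 1"
proof -
  have "{(k, q) \<in> std_params. q = 0} = (\<lambda>k. (k, 0)) ` {n1 - m1..min n1 m2}"
    by (auto simp: std_params_def)
  then have "card {(k, q) \<in> std_params. q = 0} = min n1 m2 - (n1 - m1) + 1"
    using balanced by (simp add: card_image inj_on_def)
  then show ?thesis unfolding min_four_eq .
qed

end

theorem theorem3p8:
  fixes n1 m1 n2 m2 :: nat
  assumes "n1 \<ge> 1" and "m1 \<ge> 1" and "n2 \<ge> 1" and "m2 \<ge> 1"
    and "n1 + n2 = m1 + m2"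
  shows "card (NC2 (word4 n1 m1 n2 m2)) = 1 + min n1 (min m1 (min n2 m2)) \<and>
         card (NC (word4 n1 m1 n2 m2)) = 1 + 2 * min n1 (min m1 (min n2 m2))"
proof -
  interpret four_runs n1 m1 n2 m2 using assms by unfold_locales
  have "inj_on (\<lambda>(k, q). std_part k q) {(k, q) \<in> std_params. q = 0}"
    by (rule inj_on_subset[OF std_part_inj_on]) auto
  then show ?thesis
    unfolding NC2_eq_std_parts NC_eq_std_parts card_image[OF std_part_inj_on]
    by (simp add: card_image card_std_params card_std_params_0)
qed

end
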